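(* Let $(X,\mathrm{dist})$ be a metric space, $\Sigma$ a metric space, $\{U_\sigma(t,\tau)\}_{\sigma\in\Sigma}$ a family of processes on $X$, and $K\subset X$ a compact set. Then $K$ is uniformly attracting for the family if and only if $\emptyset\ne L_\Sigma(y_n)\subset K$ for every $y_n\in\mathfrak{C}_\Sigma$.
   Context: A process on $X$ is a family of maps $U(t,\tau):X\to X$, indexed by reals $t\ge\tau$, with $U(\tau,\tau)=\mathrm{id}_X$ and $U(t,\tau)=U(t,s)U(s,\tau)$ for $t\ge s\ge\tau$; no continuity is assumed. For nonempty $B,C\subset X$, $\delta_X(B,C)=\sup_{x\in B}\inf_{\xi\in C}\mathrm{dist}(x,\xi)$. A set $K\subset X$ is uniformly attracting if for every bounded $C\subset X$, $\lim_{t-\tau\to\infty}\sup_{\sigma\in\Sigma}\delta_X(U_\sigma(t,\tau)C,K)=0$. $\mathfrak{C}_\Sigma$ is the collection of all sequences $y_n=U_{\sigma_n}(t_n,\tau_n)x_n$ with $x_n$ a bounded sequence in $X$, $\sigma_n\in\Sigma$, $t_n-\tau_n\to\infty$. For $y_n\in\mathfrak{C}_\Sigma$, $L_\Sigma(y_n)=\{x\in X: y_n\to x \text{ along some subsequence}\}$. *)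

theory Defs
  imports "HOL-Analysis.Analysis"
begin

text \<open>A family of processes indexed by \<sigma>: U \<sigma> t \<tau> x is U_\<sigma>(t,\<tau>) x (only meaningful for t \<ge> \<tau>).
  No continuity is assumed.\<close>
definition is_process_family :: "('s \<Rightarrow> real \<Rightarrow> real \<Rightarrow> 'a \<Rightarrow> 'a) \<Rightarrow> bool" where
  "is_process_family U \<longleftrightarrow>
     (\<forall>\<sigma> \<tau>. U \<sigma> \<tau> \<tau> = id) \<and>
     (\<forall>\<sigma> t s \<tau>. \<tau> \<le> s \<and> s \<le> t \<longrightarrow> U \<sigma> t \<tau> = U \<sigma> t s \<circ> U \<sigma> s \<tau>)"

definition hsemidist :: "'a::metric_space set \<Rightarrow> 'a set \<Rightarrow> ereal" where
  "hsemidist B C = (SUP x\<in>B. INF \<xi>\<in>C. ereal (dist x \<xi>))"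

definition uniformly_attracting ::
  "('s \<Rightarrow> real \<Rightarrow> real \<Rightarrow> 'a::metric_space \<Rightarrow> 'a) \<Rightarrow> 'a set \<Rightarrow> bool" where
  "uniformly_attracting U K \<longleftrightarrow>
     (\<forall>C. bounded C \<and> C \<noteq> {} \<longrightarrow>
        (\<forall>\<epsilon>>0. \<exists>T. \<forall>t \<tau>. \<tau> \<le> t \<and> T \<le> t - \<tau> \<longrightarrow>
            \<bar>(SUP \<sigma>. hsemidist (U \<sigma> t \<tau> ` C) K)\<bar> < ereal \<epsilon>))"

definition seq_class :: "('s \<Rightarrow> real \<Rightarrow> real \<Rightarrow> 'a::metric_space \<Rightarrow> 'a) \<Rightarrow> (nat \<Rightarrow> 'a) set" where
  "seq_class U = {y. \<exists>x \<sigma> t \<tau>. bounded (range x) \<and> (\<forall>n. \<tau> n \<le> t n) \<and>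
       filterlim (\<lambda>n. t n - \<tau> n) at_top sequentially \<and>
       (\<forall>n. y n = U (\<sigma> n) (t n) (\<tau> n) (x n))}"

definition limit_set :: "(nat \<Rightarrow> 'a::topological_space) \<Rightarrow> 'a set" where
  "limit_set y = {p. \<exists>r. strict_mono r \<and> (y \<circ> r) \<longlonglongrightarrow> p}"

end

theory Submission
  imports Defs
begin

text \<open>Uniform attraction says that, after a long enough time, every trajectory started in a
  bounded set lies in an arbitrarily small neighbourhood of K, uniformly in \<sigma>. Hence every
  sequence of the class C_\<Sigma> approaches K, and compactness of K yields convergent subsequences,
  whose limits must lie in K. Conversely, if K fails to attract some bounded set, one can pick,
  with t_n - \<tau>_n \<ge> n, points U_{\<sigma>_n}(t_n,\<tau>_n) x_n at distance at least \<epsilon> from K; this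
  sequence belongs to C_\<Sigma> but has no limit point in K.\<close>

lemma hsemidist_nonneg: "B \<noteq> {} \<Longrightarrow> 0 \<le> hsemidist B K"
  unfolding hsemidist_def by (meson INF_greatest SUP_upper2 ereal_less_eq(5) zero_le_dist ex_in_conv)

lemma hsemidist_less_imp_near:
  assumes "hsemidist B K < ereal e" "x \<in> B"
  shows "\<exists>k\<in>K. dist x k < e"
proof -
  have "(INF k\<in>K. ereal (dist x k)) \<le> hsemidist B K"
    unfolding hsemidist_def using assms(2) by (rule SUP_upper)
  then have "(INF k\<in>K. ereal (dist x k)) < ereal e" using assms(1) by (rule le_less_trans)
  then show ?thesis by (auto simp: INF_less_iff)
qed

lemma hsemidist_le_if_near:
  assumes "\<And>x. x \<in> B \<Longrightarrow> \<exists>k\<in>K. dist x k < e"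
  shows "hsemidist B K \<le> ereal e"
  unfolding hsemidist_def
proof (rule SUP_least)
  fix x assume "x \<in> B"
  then obtain k where "k \<in> K" "dist x k < e" using assms by blast
  then show "(INF k\<in>K. ereal (dist x k)) \<le> ereal e" by (meson INF_lower2 ereal_less_eq(3) less_imp_le)
qed

lemma SUP_hsemidist_less_imp_near:
  assumes "\<bar>SUP \<sigma>. hsemidist (F \<sigma> ` C) K\<bar> < ereal e" "x \<in> C"
  shows "\<exists>k\<in>K. dist (F \<sigma> x) k < e"
proof (rule hsemidist_less_imp_near)
  let ?S = "SUP \<sigma>. hsemidist (F \<sigma> ` C) K"
  have "hsemidist (F \<sigma> ` C) K \<le> ?S" by (rule SUP_upper) simp
  also have "\<dots> \<le> \<bar>?S\<bar>" by (cases ?S) auto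
  finally show "hsemidist (F \<sigma> ` C) K < ereal e" using assms(1) by simp
  show "F \<sigma> x \<in> F \<sigma> ` C" using assms(2) by simp
qed

lemma SUP_hsemidist_less_if_near:
  assumes "C \<noteq> {}" "e > 0" "\<And>\<sigma> x. x \<in> C \<Longrightarrow> \<exists>k\<in>K. dist (F \<sigma> x) k < e/2"
  shows "\<bar>SUP \<sigma>. hsemidist (F \<sigma> ` C) K\<bar> < ereal e"
proof -
  let ?S = "SUP \<sigma>. hsemidist (F \<sigma> ` C) K"
  have "0 \<le> ?S" using assms(1) by (intro SUP_upper2[OF UNIV_I] hsemidist_nonneg) simp
  moreover have "?S \<le> ereal (e/2)"
    using assms(3) by (intro SUP_least hsemidist_le_if_near) auto
  ultimately show ?thesis using \<open>e > 0\<close> by (cases ?S) auto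
qed

text \<open>Since \<epsilon> is arbitrary, the supremum over \<sigma> and over the bounded set in the definition
  can be replaced by a pointwise condition.\<close>

lemma uniformly_attracting_iff_near:
  fixes U :: "'s \<Rightarrow> real \<Rightarrow> real \<Rightarrow> 'a::metric_space \<Rightarrow> 'a"
  shows "uniformly_attracting U K \<longleftrightarrow>
     (\<forall>C. bounded C \<longrightarrow> (\<forall>e>0. \<exists>T. \<forall>\<sigma> t \<tau> x. \<tau> \<le> t \<and> T \<le> t - \<tau> \<and> x \<in> C \<longrightarrow>
        (\<exists>k\<in>K. dist (U \<sigma> t \<tau> x) k < e)))"
  unfolding uniformly_attracting_def
proof (intro iffI allI impI)
  let ?S = "\<lambda>C t \<tau>. SUP \<sigma>. hsemidist (U \<sigma> t \<tau> ` C) K"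
  fix C :: "'a set" and e :: real
  assume attr: "\<forall>C. bounded C \<and> C \<noteq> {} \<longrightarrow>
      (\<forall>e>0. \<exists>T. \<forall>t \<tau>. \<tau> \<le> t \<and> T \<le> t - \<tau> \<longrightarrow> \<bar>?S C t \<tau>\<bar> < ereal e)"
    and "bounded C" "e > 0"
  show "\<exists>T. \<forall>\<sigma> t \<tau> x. \<tau> \<le> t \<and> T \<le> t - \<tau> \<and> x \<in> C \<longrightarrow> (\<exists>k\<in>K. dist (U \<sigma> t \<tau> x) k < e)"
  proof (cases "C = {}")
    case False
    then obtain T where "\<forall>t \<tau>. \<tau> \<le> t \<and> T \<le> t - \<tau> \<longrightarrow> \<bar>?S C t \<tau>\<bar> < ereal e"
      using attr \<open>bounded C\<close> \<open>e > 0\<close> by blast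
    then show ?thesis using SUP_hsemidist_less_imp_near[of "\<lambda>\<sigma>. U \<sigma> _ _"] by blast
  qed simp
next
  let ?S = "\<lambda>C t \<tau>. SUP \<sigma>. hsemidist (U \<sigma> t \<tau> ` C) K"
  fix C :: "'a set" and e :: real
  assume "\<forall>C. bounded C \<longrightarrow> (\<forall>e>0. \<exists>T. \<forall>\<sigma> t \<tau> x. \<tau> \<le> t \<and> T \<le> t - \<tau> \<and> x \<in> C \<longrightarrow>
      (\<exists>k\<in>K. dist (U \<sigma> t \<tau> x) k < e))"
    and C: "bounded C \<and> C \<noteq> {}" and "e > 0"
  then obtain T where "\<And>\<sigma> t \<tau> x. \<tau> \<le> t \<Longrightarrow> T \<le> t - \<tau> \<Longrightarrow> x \<in> C \<Longrightarrow>
      \<exists>k\<in>K. dist (U \<sigma> t \<tau> x) k < e/2"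
    by (meson half_gt_zero)
  then have "\<bar>?S C t \<tau>\<bar> < ereal e" if "\<tau> \<le> t" "T \<le> t - \<tau>" for t \<tau>
    using C \<open>e > 0\<close> that by (intro SUP_hsemidist_less_if_near) auto
  then show "\<exists>T. \<forall>t \<tau>. \<tau> \<le> t \<and> T \<le> t - \<tau> \<longrightarrow> \<bar>?S C t \<tau>\<bar> < ereal e"
    by blast
qed

lemma tendsto_dist_transform:
  fixes f g :: "'b \<Rightarrow> 'a::metric_space"
  assumes "(f \<longlongrightarrow> p) F" "((\<lambda>n. dist (g n) (f n)) \<longlongrightarrow> 0) F"
  shows "(g \<longlongrightarrow> p) F"
proof -
  have "((\<lambda>n. dist (f n) p) \<longlongrightarrow> 0) F"
    using assms(1) by (rule tendsto_dist_iff[THEN iffD1])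
  with assms(2) have bound: "((\<lambda>n. dist (g n) (f n) + dist (f n) p) \<longlongrightarrow> 0) F"
    by (rule tendsto_add_zero)
  have "((\<lambda>n. dist (g n) p) \<longlongrightarrow> 0) F"
    by (rule tendsto_sandwich[OF _ _ tendsto_const bound]) (auto intro: always_eventually dist_triangle)
  then show ?thesis by (rule tendsto_dist_iff[THEN iffD2])
qed

lemma nearest_points_tendsto_dist_zero:
  fixes y :: "nat \<Rightarrow> 'a::metric_space"
  assumes "compact K" and near: "\<And>e. e > 0 \<Longrightarrow> eventually (\<lambda>n. \<exists>k\<in>K. dist (y n) k < e) sequentially"
  obtains k where "\<And>n. k n \<in> K" "(\<lambda>n. dist (y n) (k n)) \<longlonglongrightarrow> 0"
proof -
  have "K \<noteq> {}" using eventually_happens'[OF _ near[of 1]] by auto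
  have "\<exists>k\<in>K. \<forall>k'\<in>K. dist (y n) k \<le> dist (y n) k'" for n
    by (rule continuous_attains_inf[OF \<open>compact K\<close> \<open>K \<noteq> {}\<close>]) (intro continuous_intros)
  then obtain k where kK: "\<And>n. k n \<in> K" and nearest: "\<And>n k'. k' \<in> K \<Longrightarrow> dist (y n) (k n) \<le> dist (y n) k'"
    by (metis bchoice UNIV_I)
  have "(\<lambda>n. dist (y n) (k n)) \<longlonglongrightarrow> 0"
  proof (rule tendstoI)
    fix e :: real assume "e > 0"
    from near[OF this] show "eventually (\<lambda>n. dist (dist (y n) (k n)) 0 < e) sequentially"
      by (rule eventually_mono) (auto intro: le_less_trans[OF nearest])
  qed
  with kK that show ?thesis by blast
qed

lemma limit_set_nonempty_if_near_compact:
  fixes y :: "nat \<Rightarrow> 'a::metric_space"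
  assumes "compact K" "\<And>e. e > 0 \<Longrightarrow> eventually (\<lambda>n. \<exists>k\<in>K. dist (y n) k < e) sequentially"
  shows "limit_set y \<inter> K \<noteq> {}"
proof -
  obtain k where kK: "\<And>n. k n \<in> K" and dk: "(\<lambda>n. dist (y n) (k n)) \<longlonglongrightarrow> 0"
    using nearest_points_tendsto_dist_zero[OF assms] by blast
  obtain p r where "p \<in> K" "strict_mono r" "(k \<circ> r) \<longlonglongrightarrow> p"
    using seq_compactE[OF compact_imp_seq_compact[OF \<open>compact K\<close>], of k] kK by blast
  moreover have "(y \<circ> r) \<longlonglongrightarrow> p"
    using LIMSEQ_subseq_LIMSEQ[OF dk \<open>strict_mono r\<close>]
    by (intro tendsto_dist_transform[OF \<open>(k \<circ> r) \<longlonglongrightarrow> p\<close>]) (simp add: o_def)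
  ultimately show ?thesis unfolding limit_set_def by blast
qed

lemma limit_set_subset_if_near_compact:
  fixes y :: "nat \<Rightarrow> 'a::metric_space"
  assumes "compact K" "\<And>e. e > 0 \<Longrightarrow> eventually (\<lambda>n. \<exists>k\<in>K. dist (y n) k < e) sequentially"
  shows "limit_set y \<subseteq> K"
proof
  fix q assume "q \<in> limit_set y"
  then obtain s where "strict_mono s" "(y \<circ> s) \<longlonglongrightarrow> q" unfolding limit_set_def by blast
  obtain k where kK: "\<And>n. k n \<in> K" and dk: "(\<lambda>n. dist (y n) (k n)) \<longlonglongrightarrow> 0"
    using nearest_points_tendsto_dist_zero[OF assms] by blast
  have "(k \<circ> s) \<longlonglongrightarrow> q"
    using LIMSEQ_subseq_LIMSEQ[OF dk \<open>strict_mono s\<close>]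
    by (intro tendsto_dist_transform[OF \<open>(y \<circ> s) \<longlonglongrightarrow> q\<close>]) (simp add: o_def dist_commute)
  then show "q \<in> K"
    using closed_sequentially[OF compact_imp_closed[OF \<open>compact K\<close>] _ \<open>(k \<circ> s) \<longlonglongrightarrow> q\<close>] kK
    by simp
qed

lemma uniformly_attracting_imp_seq_class_near:
  fixes U :: "'s \<Rightarrow> real \<Rightarrow> real \<Rightarrow> 'a::metric_space \<Rightarrow> 'a"
  assumes "uniformly_attracting U K" "y \<in> seq_class U" "e > 0"
  shows "eventually (\<lambda>n. \<exists>k\<in>K. dist (y n) k < e) sequentially"
proof -
  obtain x \<sigma> t \<tau> where bounded: "bounded (range x)" and le: "\<And>n. \<tau> n \<le> t n"
    and lim: "filterlim (\<lambda>n. t n - \<tau> n) at_top sequentially"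
    and y: "\<And>n. y n = U (\<sigma> n) (t n) (\<tau> n) (x n)"
    using \<open>y \<in> seq_class U\<close> unfolding seq_class_def by auto
  obtain T where T: "\<forall>\<sigma> t \<tau> z. \<tau> \<le> t \<and> T \<le> t - \<tau> \<and> z \<in> range x \<longrightarrow>
      (\<exists>k\<in>K. dist (U \<sigma> t \<tau> z) k < e)"
    using assms(1)[unfolded uniformly_attracting_iff_near, rule_format, OF bounded \<open>e > 0\<close>] ..
  have "eventually (\<lambda>n. T \<le> t n - \<tau> n) sequentially"
    using lim by (simp add: filterlim_at_top)
  then show ?thesis
    by (rule eventually_mono) (simp add: T le y)
qed

lemma uniformly_attractingI_limit_set:
  fixes U :: "'s \<Rightarrow> real \<Rightarrow> real \<Rightarrow> 'a::metric_space \<Rightarrow> 'a"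
  assumes "\<And>y. y \<in> seq_class U \<Longrightarrow> limit_set y \<inter> K \<noteq> {}"
  shows "uniformly_attracting U K"
proof (rule ccontr)
  assume "\<not> uniformly_attracting U K"
  then obtain C e where "bounded C" "e > 0" and far: "\<And>T. \<exists>\<sigma> t \<tau> z. \<tau> \<le> t \<and> T \<le> t - \<tau> \<and> z \<in> C \<and>
      (\<forall>k\<in>K. e \<le> dist (U \<sigma> t \<tau> z) k)"
    unfolding uniformly_attracting_iff_near by (auto simp: not_less)
  then obtain \<sigma> t \<tau> x where le: "\<And>n. \<tau> n \<le> t n" and long: "\<And>n. real n \<le> t n - \<tau> n"
    and xC: "\<And>n. x n \<in> C" and far_n: "\<And>n k. k \<in> K \<Longrightarrow> e \<le> dist (U (\<sigma> n) (t n) (\<tau> n) (x n)) k"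
  proof -
    from far[of "real _"] have "\<exists>\<sigma> t \<tau> x. \<forall>n::nat. \<tau> n \<le> t n \<and> real n \<le> t n - \<tau> n \<and> x n \<in> C \<and>
        (\<forall>k\<in>K. e \<le> dist (U (\<sigma> n) (t n) (\<tau> n) (x n)) k)"
      by (subst choice_iff[symmetric])+ blast
    then show thesis using that by blast
  qed
  define y where "y n = U (\<sigma> n) (t n) (\<tau> n) (x n)" for n
  have "filterlim (\<lambda>n. t n - \<tau> n) at_top sequentially"
    by (rule filterlim_at_top_mono[OF filterlim_real_sequentially]) (use long in auto)
  moreover have "bounded (range x)"
    using \<open>bounded C\<close> xC by (meson bounded_subset image_subsetI)
  ultimately have "y \<in> seq_class U"
    unfolding seq_class_def y_def using le by blast
  then obtain p r where "p \<in> K" "(y \<circ> r) \<longlonglongrightarrow> p"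
    using assms unfolding limit_set_def by blast
  then obtain n where "dist (y (r n)) p < e"
    using \<open>e > 0\<close> by (metis comp_apply eventually_happens' tendstoD trivial_limit_sequentially)
  with far_n[OF \<open>p \<in> K\<close>] show False unfolding y_def by (meson not_less)
qed

theorem proposition2p7:
  fixes U :: "'s::metric_space \<Rightarrow> real \<Rightarrow> real \<Rightarrow> 'a::metric_space \<Rightarrow> 'a"
    and K :: "'a set"
  assumes "is_process_family U"
    and "compact K"
  shows "uniformly_attracting U K \<longleftrightarrow>
           (\<forall>y\<in>seq_class U. limit_set y \<noteq> {} \<and> limit_set y \<subseteq> K)"
proof
  assume "uniformly_attracting U K"
  then have near: "eventually (\<lambda>n. \<exists>k\<in>K. dist (y n) k < e) sequentially"
    if "y \<in> seq_class U" "e > 0" for y e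
    using that by (rule uniformly_attracting_imp_seq_class_near)
  have "limit_set y \<inter> K \<noteq> {} \<and> limit_set y \<subseteq> K" if "y \<in> seq_class U" for y
    using limit_set_nonempty_if_near_compact[OF \<open>compact K\<close> near[OF that]]
      limit_set_subset_if_near_compact[OF \<open>compact K\<close> near[OF that]] by blast
  then show "\<forall>y\<in>seq_class U. limit_set y \<noteq> {} \<and> limit_set y \<subseteq> K" by blast
next
  assume "\<forall>y\<in>seq_class U. limit_set y \<noteq> {} \<and> limit_set y \<subseteq> K"
  then show "uniformly_attracting U K"
    by (intro uniformly_attractingI_limit_set) blast
qed

end
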